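(* Let $q\ge2$, let $U_1,\dots,U_q\in U(q)$ be arbitrary and let $D=\sum_{j=1}^q|j\rangle\langle j|\otimes U_j$ (the block-diagonal unitary $\bigoplus_j U_j$). Then $SD$ and $DS$ are dual-unitary, and $$\mathcal{M}_+^{DS}(a)_{jk}=\frac1q\operatorname{tr}(U_j^\dagger U_k)\,a_{jk}\quad(1\le j,k\le q),\qquad \mathcal{M}_+^{SD}(a)=\frac1q\sum_{j=1}^q U_j^\dagger a\,U_j .$$ In particular the eigenvalues of $\mathcal{M}_+^{DS}$ are the $q^2$ numbers $\frac1q\operatorname{tr}(U_j^\dagger U_k)$, $1\le j,k\le q$; at least $q$ of them equal $1$, and if the $U_j$ are pairwise orthogonal in the Hilbert–Schmidt inner product then all the others are $0$.
   Context: Product basis $|i\alpha\rangle$ of $\mathbb{C}^q\otimes\mathbb{C}^q$; realignment $\langle\beta\alpha|X^{R_1}|ji\rangle=\langle i\alpha|X|j\beta\rangle$; a unitary $U$ is dual-unitary if $U^{R_1}$ is unitary. $S$ is the swap operator. For unitary $U$, $\mathcal{M}_+^U(a)=\frac1q\operatorname{tr}_1[U^\dagger(a\otimes I)U]$ for $q\times q$ matrices $a$, where $\operatorname{tr}_1$ is the partial trace over the first factor. *)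

theory Defs
  imports Complex_Main "Jordan_Normal_Form.Matrix" "Jordan_Normal_Form.Char_Poly"
begin

text \<open>Conventions: all indices are 0-based. The product basis vector |i alpha> of
  C^q (x) C^q (i, alpha < q) is the standard basis vector with index i*q + alpha.\<close>

definition adj :: "complex mat \<Rightarrow> complex mat" where
  "adj A = mat (dim_col A) (dim_row A) (\<lambda>(i,j). cnj (A $$ (j,i)))"

definition tr :: "complex mat \<Rightarrow> complex" where
  "tr A = (\<Sum>i<dim_row A. A $$ (i,i))"

definition unitary_mat :: "nat \<Rightarrow> complex mat \<Rightarrow> bool" where
  "unitary_mat n U \<longleftrightarrow> U \<in> carrier_mat n n \<and> adj U * U = 1\<^sub>m n \<and> U * adj U = 1\<^sub>m n"

text \<open>Realignment: <beta alpha| X^R |j i> = <i alpha| X |j beta>.\<close>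
definition realign :: "nat \<Rightarrow> complex mat \<Rightarrow> complex mat" where
  "realign q X = mat (q*q) (q*q)
     (\<lambda>(r,c). X $$ ((c mod q) * q + r mod q, (c div q) * q + r div q))"

definition dual_unitary :: "nat \<Rightarrow> complex mat \<Rightarrow> bool" where
  "dual_unitary q U \<longleftrightarrow> unitary_mat (q*q) U \<and> unitary_mat (q*q) (realign q U)"

text \<open>Swap operator: S |j beta> = |beta j>.\<close>
definition swap_op :: "nat \<Rightarrow> complex mat" where
  "swap_op q = mat (q*q) (q*q)
     (\<lambda>(r,c). if r div q = c mod q \<and> r mod q = c div q then 1 else 0)"

definition tensor :: "nat \<Rightarrow> complex mat \<Rightarrow> complex mat \<Rightarrow> complex mat" where
  "tensor q A B = mat (q*q) (q*q)
     (\<lambda>(r,c). A $$ (r div q, c div q) * B $$ (r mod q, c mod q))"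

definition ptrace1 :: "nat \<Rightarrow> complex mat \<Rightarrow> complex mat" where
  "ptrace1 q X = mat q q (\<lambda>(a,b). \<Sum>i<q. X $$ (i*q + a, i*q + b))"

definition M_plus :: "nat \<Rightarrow> complex mat \<Rightarrow> complex mat \<Rightarrow> complex mat" where
  "M_plus q U a = (1 / of_nat q) \<cdot>\<^sub>m ptrace1 q (adj U * tensor q a (1\<^sub>m q) * U)"

definition block_diag :: "nat \<Rightarrow> (nat \<Rightarrow> complex mat) \<Rightarrow> complex mat" where
  "block_diag q U = mat (q*q) (q*q)
     (\<lambda>(r,c). if r div q = c div q then U (r div q) $$ (r mod q, c mod q) else 0)"

definition mat_unit :: "nat \<Rightarrow> nat \<Rightarrow> nat \<Rightarrow> complex mat" where
  "mat_unit q j k = mat q q (\<lambda>(a,b). if a = j \<and> b = k then 1 else 0)"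

text \<open>Matrix (q^2 x q^2) of a linear map on q x q matrices w.r.t. the basis E_{jk}
  (basis element E_{jk} has index j*q + k).\<close>
definition superop_mat :: "nat \<Rightarrow> (complex mat \<Rightarrow> complex mat) \<Rightarrow> complex mat" where
  "superop_mat q M = mat (q*q) (q*q)
     (\<lambda>(r,c). (M (mat_unit q (c div q) (c mod q))) $$ (r div q, r mod q))"

end

theory Submission
  imports Defs
begin

(* In the product basis S permutes the flat index i*q + a to a*q + i, and D is block diagonal
   with blocks U_j, so every claim reduces to an index computation.
   Realignment fixes DS and maps SD to S times the block-diagonal matrix of the transposes of
   the U_j; both are products of unitaries, hence SD and DS are dual-unitary.
   For DS, conjugation by S moves the partial trace to the second factor, and the (j,k) block
   of D^*(a (x) I)D is a_jk U_j^* U_k, whose trace yields tr(U_j^* U_k) a_jk / q.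
   For SD, S(a (x) I)S = I (x) a is block diagonal, so the conjugated operator is block diagonal
   with blocks U_j^* a U_j.
   Thus M_+^DS acts diagonally on the matrix units, which gives its characteristic polynomial;
   unitarity makes the q numbers tr(U_j^* U_j)/q equal to 1, and Hilbert-Schmidt orthogonality
   makes all others vanish. *)

lemma pair_index_div_mod [simp]:
  fixes i a q :: nat
  assumes "a < q"
  shows "(i*q + a) div q = i" "(i*q + a) mod q = a"
  using assms by auto

lemma pair_index_less:
  fixes i a q :: nat
  assumes "i < q" "a < q"
  shows "i*q + a < q*q"
proof -
  have "i*q + a < (i+1)*q" using assms(2) by simp
  also have "\<dots> \<le> q*q" using assms(1) by (intro mult_le_mono1) simp
  finally show ?thesis .
qed

lemma pair_index_bounds:
  fixes r q :: nat
  assumes "r < q*q"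
  shows "r div q < q" "r mod q < q"
proof -
  have "0 < q" using assms by (cases q) auto
  with assms show "r div q < q" "r mod q < q" by (auto simp: less_mult_imp_div_less)
qed

lemma bij_betw_pair_index:
  "bij_betw (\<lambda>(i,a). i*q + a) ({..<q} \<times> {..<q}) {..<q*(q::nat)}"
  by (rule bij_betw_byWitness[where f' = "\<lambda>r. (r div q, r mod q)"])
     (auto simp: pair_index_less pair_index_bounds)

lemma sum_pair_index: "(\<Sum>r<q*q. f r) = (\<Sum>i<(q::nat). \<Sum>a<q. f (i*q + a))"
  using sum.reindex_bij_betw[OF bij_betw_pair_index, of f]
  by (simp add: sum.cartesian_product case_prod_beta)

lemma prod_pair_index: "(\<Prod>r<q*q. f r) = (\<Prod>(i,a) \<in> {..<q} \<times> {..<(q::nat)}. f (i*q + a))"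
  using prod.reindex_bij_betw[OF bij_betw_pair_index, of f] by (simp add: case_prod_beta)

lemma index_mult_mat_sum:
  assumes "A \<in> carrier_mat n m" "B \<in> carrier_mat m p" "i < n" "j < p"
  shows "(A * B) $$ (i,j) = (\<Sum>k<m. A $$ (i,k) * B $$ (k,j))"
  using assms by (simp add: scalar_prod_def atLeast0LessThan)

(* Entries of products are expanded by index_mult_mat_sum and the index lemmas below,
   which the library's row/column form would otherwise preempt. *)
declare index_mult_mat(1) [simp del]

lemma adj_carrier_mat [simp]: "A \<in> carrier_mat n m \<Longrightarrow> adj A \<in> carrier_mat m n"
  unfolding adj_def by simp

lemma dim_adj [simp]: "dim_row (adj A) = dim_col A" "dim_col (adj A) = dim_row A"
  unfolding adj_def by simp_all

lemma index_adj: "i < dim_col A \<Longrightarrow> j < dim_row A \<Longrightarrow> adj A $$ (i,j) = cnj (A $$ (j,i))"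
  unfolding adj_def by simp

lemma adj_mult_mat:
  assumes A: "A \<in> carrier_mat n m" and B: "B \<in> carrier_mat m p"
  shows "adj (A * B) = adj B * adj A"
proof (rule eq_matI)
  fix i j assume "i < dim_row (adj B * adj A)" "j < dim_col (adj B * adj A)"
  hence i: "i < p" and j: "j < n" using A B by auto
  have "adj (A * B) $$ (i,j) = cnj (\<Sum>k<m. A $$ (j,k) * B $$ (k,i))"
    using A B i j by (simp add: index_adj index_mult_mat_sum[OF A B j i])
  also have "\<dots> = (\<Sum>k<m. adj B $$ (i,k) * adj A $$ (k,j))"
    using A B i j by (simp add: index_adj mult.commute)
  also have "\<dots> = (adj B * adj A) $$ (i,j)"
    using index_mult_mat_sum[OF adj_carrier_mat[OF B] adj_carrier_mat[OF A] i j] by simp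
  finally show "adj (A * B) $$ (i,j) = (adj B * adj A) $$ (i,j)" .
qed (use A B in auto)

lemma adj_transpose_mat: "adj (transpose_mat A) = transpose_mat (adj A)"
  by (rule eq_matI) (auto simp: adj_def)

lemma square_mult_carrier_mat [simp]:
  "A \<in> carrier_mat n n \<Longrightarrow> B \<in> carrier_mat n n \<Longrightarrow> A * B \<in> carrier_mat n n"
  by simp

lemma unitary_mat_carrier: "unitary_mat n U \<Longrightarrow> U \<in> carrier_mat n n"
  unfolding unitary_mat_def by simp

lemma unitary_mat_mult:
  assumes A: "unitary_mat n A" and B: "unitary_mat n B"
  shows "unitary_mat n (A * B)"
proof -
  have Ac: "A \<in> carrier_mat n n" and Bc: "B \<in> carrier_mat n n"
    and A1: "adj A * A = 1\<^sub>m n" and A2: "A * adj A = 1\<^sub>m n"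
    and B1: "adj B * B = 1\<^sub>m n" and B2: "B * adj B = 1\<^sub>m n"
    using A B unfolding unitary_mat_def by auto
  have "adj (A * B) * (A * B) = adj B * ((adj A * A) * B)"
    using Ac Bc by (simp add: adj_mult_mat[OF Ac Bc] assoc_mult_mat[of _ n n _ n _ n])
  hence left: "adj (A * B) * (A * B) = 1\<^sub>m n" using A1 B1 Bc by simp
  have "(A * B) * adj (A * B) = A * ((B * adj B) * adj A)"
    using Ac Bc by (simp add: adj_mult_mat[OF Ac Bc] assoc_mult_mat[of _ n n _ n _ n])
  hence right: "(A * B) * adj (A * B) = 1\<^sub>m n" using A2 B2 Ac by simp
  show ?thesis using left right Ac Bc unfolding unitary_mat_def by auto
qed

lemma unitary_mat_transpose:
  assumes "unitary_mat n A"
  shows "unitary_mat n (transpose_mat A)"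
proof -
  have Ac: "A \<in> carrier_mat n n" and "adj A * A = 1\<^sub>m n" "A * adj A = 1\<^sub>m n"
    using assms unfolding unitary_mat_def by auto
  moreover have "adj (transpose_mat A) * transpose_mat A = transpose_mat (A * adj A)"
    "transpose_mat A * adj (transpose_mat A) = transpose_mat (adj A * A)"
    using transpose_mult[OF Ac adj_carrier_mat[OF Ac]] transpose_mult[OF adj_carrier_mat[OF Ac] Ac]
    by (simp_all add: adj_transpose_mat)
  ultimately show ?thesis unfolding unitary_mat_def by auto
qed

lemma tr_adj_mult_unitary: "unitary_mat n U \<Longrightarrow> tr (adj U * U) = of_nat n"
  unfolding unitary_mat_def tr_def by simp

section \<open>The swap operator\<close>

definition swap_index :: "nat \<Rightarrow> nat \<Rightarrow> nat" where
  "swap_index q r = (r mod q)*q + r div q"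

lemma swap_index_pair [simp]: "i < q \<Longrightarrow> a < q \<Longrightarrow> swap_index q (i*q + a) = a*q + i"
  unfolding swap_index_def by simp

lemma swap_index_less: "r < q*q \<Longrightarrow> swap_index q r < q*q"
  unfolding swap_index_def by (simp add: pair_index_bounds pair_index_less)

lemma swap_index_swap_index: "r < q*q \<Longrightarrow> swap_index q (swap_index q r) = r"
  unfolding swap_index_def by (simp add: pair_index_bounds)

lemma swap_index_eq_iff:
  "r < q*q \<Longrightarrow> k < q*q \<Longrightarrow> k = swap_index q r \<longleftrightarrow> r = swap_index q k"
  using swap_index_swap_index by metis

lemma swap_op_carrier [simp]: "swap_op q \<in> carrier_mat (q*q) (q*q)"
  unfolding swap_op_def by simp

lemma dim_swap_op [simp]: "dim_row (swap_op q) = q*q" "dim_col (swap_op q) = q*q"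
  unfolding swap_op_def by simp_all

lemma index_swap_op:
  assumes "r < q*q" "k < q*q"
  shows "swap_op q $$ (r,k) = (if k = swap_index q r then 1 else 0)"
proof -
  have "(r div q = k mod q \<and> r mod q = k div q) \<longleftrightarrow> k = swap_index q r"
    using assms div_mult_mod_eq[of k q] unfolding swap_index_def
    by (auto simp: pair_index_bounds)
  thus ?thesis using assms unfolding swap_op_def by simp
qed

lemma index_swap_op_mult:
  assumes "dim_row X = q*q" "r < q*q" "c < dim_col X"
  shows "(swap_op q * X) $$ (r,c) = X $$ (swap_index q r, c)"
proof -
  have X: "X \<in> carrier_mat (q*q) (dim_col X)" using assms(1) by auto
  have "(swap_op q * X) $$ (r,c) = (\<Sum>k<q*q. if k = swap_index q r then X $$ (k,c) else 0)"
    unfolding index_mult_mat_sum[OF swap_op_carrier X assms(2,3)]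
    by (rule sum.cong) (use assms in \<open>auto simp: index_swap_op\<close>)
  thus ?thesis using swap_index_less[OF assms(2)] by simp
qed

lemma index_mult_swap_op:
  assumes "dim_col X = q*q" "r < dim_row X" "c < q*q"
  shows "(X * swap_op q) $$ (r,c) = X $$ (r, swap_index q c)"
proof -
  have X: "X \<in> carrier_mat (dim_row X) (q*q)" using assms(1) by auto
  have "(X * swap_op q) $$ (r,c) = (\<Sum>k<q*q. if k = swap_index q c then X $$ (r,k) else 0)"
    unfolding index_mult_mat_sum[OF X swap_op_carrier assms(2,3)]
    by (rule sum.cong) (use assms in \<open>auto simp: index_swap_op swap_index_eq_iff\<close>)
  thus ?thesis using swap_index_less[OF assms(3)] by simp
qed

lemma index_swap_op_conj:
  assumes X: "X \<in> carrier_mat (q*q) (q*q)" and r: "r < q*q" and c: "c < q*q"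
  shows "(swap_op q * (X * swap_op q)) $$ (r,c) = X $$ (swap_index q r, swap_index q c)"
  using assms swap_index_less[OF r] by (simp add: index_swap_op_mult index_mult_swap_op)

lemma adj_swap_op: "adj (swap_op q) = swap_op q"
  by (rule eq_matI) (auto simp: adj_def swap_op_def)

lemma swap_op_mult_swap_op: "swap_op q * swap_op q = 1\<^sub>m (q*q)"
proof (rule eq_matI)
  fix r c assume "r < dim_row (1\<^sub>m (q*q))" "c < dim_col (1\<^sub>m (q*q))"
  hence r: "r < q*q" and c: "c < q*q" by auto
  then show "(swap_op q * swap_op q) $$ (r,c) = 1\<^sub>m (q*q) $$ (r,c)"
    by (simp add: index_swap_op_mult index_swap_op swap_index_less swap_index_swap_index)
qed auto

lemma unitary_swap_op: "unitary_mat (q*q) (swap_op q)"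
  unfolding unitary_mat_def by (simp add: adj_swap_op swap_op_mult_swap_op)

section \<open>Block-diagonal matrices\<close>

lemma block_diag_carrier [simp]: "block_diag q A \<in> carrier_mat (q*q) (q*q)"
  unfolding block_diag_def by simp

lemma dim_block_diag [simp]: "dim_row (block_diag q A) = q*q" "dim_col (block_diag q A) = q*q"
  unfolding block_diag_def by simp_all

lemma index_block_diag:
  "r < q*q \<Longrightarrow> c < q*q \<Longrightarrow> block_diag q A $$ (r,c) =
     (if r div q = c div q then A (r div q) $$ (r mod q, c mod q) else 0)"
  unfolding block_diag_def by simp

lemma index_block_diag_mult:
  assumes "dim_row X = q*q" and r: "r < q*q" and c: "c < dim_col X"
  shows "(block_diag q A * X) $$ (r,c) =
    (\<Sum>b<q. A (r div q) $$ (r mod q, b) * X $$ ((r div q)*q + b, c))"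
proof -
  have X: "X \<in> carrier_mat (q*q) (dim_col X)" using assms(1) by auto
  have "(block_diag q A * X) $$ (r,c) =
      (\<Sum>i<q. \<Sum>b<q. block_diag q A $$ (r, i*q + b) * X $$ (i*q + b, c))"
    unfolding index_mult_mat_sum[OF block_diag_carrier X r c] by (rule sum_pair_index)
  also have "\<dots> = (\<Sum>i<q. if i = r div q
      then (\<Sum>b<q. A (r div q) $$ (r mod q, b) * X $$ ((r div q)*q + b, c)) else 0)"
    by (rule sum.cong) (auto simp: index_block_diag pair_index_less r)
  finally show ?thesis using pair_index_bounds[OF r] by simp
qed

lemma index_mult_block_diag:
  assumes "dim_col X = q*q" and r: "r < dim_row X" and c: "c < q*q"
  shows "(X * block_diag q A) $$ (r,c) =
    (\<Sum>b<q. X $$ (r, (c div q)*q + b) * A (c div q) $$ (b, c mod q))"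
proof -
  have X: "X \<in> carrier_mat (dim_row X) (q*q)" using assms(1) by auto
  have "(X * block_diag q A) $$ (r,c) =
      (\<Sum>i<q. \<Sum>b<q. X $$ (r, i*q + b) * block_diag q A $$ (i*q + b, c))"
    unfolding index_mult_mat_sum[OF X block_diag_carrier r c] by (rule sum_pair_index)
  also have "\<dots> = (\<Sum>i<q. if i = c div q
      then (\<Sum>b<q. X $$ (r, (c div q)*q + b) * A (c div q) $$ (b, c mod q)) else 0)"
    by (rule sum.cong) (auto simp: index_block_diag pair_index_less c)
  finally show ?thesis using pair_index_bounds[OF c] by simp
qed

lemma adj_block_diag:
  assumes "\<And>j. j < q \<Longrightarrow> A j \<in> carrier_mat q q"
  shows "adj (block_diag q A) = block_diag q (\<lambda>j. adj (A j))"
proof (rule eq_matI)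
  fix r c assume "r < dim_row (block_diag q (\<lambda>j. adj (A j)))" "c < dim_col (block_diag q (\<lambda>j. adj (A j)))"
  hence r: "r < q*q" and c: "c < q*q" by auto
  show "adj (block_diag q A) $$ (r,c) = block_diag q (\<lambda>j. adj (A j)) $$ (r,c)"
    using r c pair_index_bounds[OF r] pair_index_bounds[OF c] assms[of "r div q"]
    by (auto simp: index_adj index_block_diag)
qed auto

lemma block_diag_mult:
  assumes A: "\<And>j. j < q \<Longrightarrow> A j \<in> carrier_mat q q"
    and B: "\<And>j. j < q \<Longrightarrow> B j \<in> carrier_mat q q"
  shows "block_diag q A * block_diag q B = block_diag q (\<lambda>j. A j * B j)"
proof (rule eq_matI)
  fix r c assume "r < dim_row (block_diag q (\<lambda>j. A j * B j))" "c < dim_col (block_diag q (\<lambda>j. A j * B j))"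
  hence r: "r < q*q" and c: "c < q*q" by auto
  note R = pair_index_bounds[OF r] and C = pair_index_bounds[OF c]
  have "(block_diag q A * block_diag q B) $$ (r,c) =
      (\<Sum>b<q. A (r div q) $$ (r mod q, b) * block_diag q B $$ ((r div q)*q + b, c))"
    using r c by (simp add: index_block_diag_mult)
  also have "\<dots> = (\<Sum>b<q. A (r div q) $$ (r mod q, b) *
      (if r div q = c div q then B (r div q) $$ (b, c mod q) else 0))"
    by (rule sum.cong) (use R c in \<open>auto simp: index_block_diag pair_index_less\<close>)
  also have "\<dots> = (if r div q = c div q then (A (r div q) * B (r div q)) $$ (r mod q, c mod q) else 0)"
    using index_mult_mat_sum[OF A B, of "r div q" "r div q" "r mod q" "c mod q"] R C by auto
  also have "\<dots> = block_diag q (\<lambda>j. A j * B j) $$ (r,c)" using r c by (simp add: index_block_diag)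
  finally show "(block_diag q A * block_diag q B) $$ (r,c) = block_diag q (\<lambda>j. A j * B j) $$ (r,c)" .
qed auto

lemma block_diag_cong: "(\<And>j. j < q \<Longrightarrow> A j = B j) \<Longrightarrow> block_diag q A = block_diag q B"
  unfolding block_diag_def by (rule eq_matI) (auto simp: pair_index_bounds)

lemma block_diag_one: "block_diag q (\<lambda>_. 1\<^sub>m q) = 1\<^sub>m (q*q)"
proof (rule eq_matI)
  fix r c assume "r < dim_row (1\<^sub>m (q*q))" "c < dim_col (1\<^sub>m (q*q))"
  hence r: "r < q*q" and c: "c < q*q" by auto
  have "(r div q = c div q \<and> r mod q = c mod q) \<longleftrightarrow> r = c"
    by (metis div_mult_mod_eq)
  thus "block_diag q (\<lambda>_. 1\<^sub>m q) $$ (r,c) = 1\<^sub>m (q*q) $$ (r,c)"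
    using r c pair_index_bounds[OF r] pair_index_bounds[OF c] by (auto simp: index_block_diag)
qed auto

lemma unitary_block_diag:
  assumes U: "\<And>j. j < q \<Longrightarrow> unitary_mat q (U j)"
  shows "unitary_mat (q*q) (block_diag q U)"
proof -
  have Uc: "\<And>j. j < q \<Longrightarrow> U j \<in> carrier_mat q q"
    and Uc': "\<And>j. j < q \<Longrightarrow> adj (U j) \<in> carrier_mat q q"
    using U unitary_mat_carrier by auto
  have "adj (block_diag q U) * block_diag q U = block_diag q (\<lambda>j. adj (U j) * U j)"
    "block_diag q U * adj (block_diag q U) = block_diag q (\<lambda>j. U j * adj (U j))"
    by (simp_all add: adj_block_diag[OF Uc] block_diag_mult[OF Uc' Uc] block_diag_mult[OF Uc Uc'])
  moreover have "block_diag q (\<lambda>j. adj (U j) * U j) = 1\<^sub>m (q*q)"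
    "block_diag q (\<lambda>j. U j * adj (U j)) = 1\<^sub>m (q*q)"
    using U unfolding unitary_mat_def block_diag_one[symmetric] by (auto intro: block_diag_cong)
  ultimately show ?thesis unfolding unitary_mat_def by simp
qed

section \<open>Dual unitarity\<close>

lemma realign_swap_op_block_diag:
  assumes U: "\<And>j. j < q \<Longrightarrow> U j \<in> carrier_mat q q"
  shows "realign q (swap_op q * block_diag q U) =
    swap_op q * block_diag q (\<lambda>j. transpose_mat (U j))"
proof (rule eq_matI)
  fix r c assume "r < dim_row (swap_op q * block_diag q (\<lambda>j. transpose_mat (U j)))"
    "c < dim_col (swap_op q * block_diag q (\<lambda>j. transpose_mat (U j)))"
  hence r: "r < q*q" and c: "c < q*q" by auto
  note R = pair_index_bounds[OF r] and C = pair_index_bounds[OF c]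
  have "realign q (swap_op q * block_diag q U) $$ (r,c)
      = block_diag q U $$ ((r mod q)*q + c mod q, (c div q)*q + r div q)"
    using r c R C pair_index_less by (simp add: realign_def index_swap_op_mult)
  also have "\<dots> = (if r mod q = c div q then U (r mod q) $$ (c mod q, r div q) else 0)"
    using R C pair_index_less by (simp add: index_block_diag)
  also have "\<dots> = (swap_op q * block_diag q (\<lambda>j. transpose_mat (U j))) $$ (r,c)"
    using r c R C U[of "r mod q"] swap_index_less[OF r]
    by (auto simp: index_swap_op_mult swap_index_def index_block_diag)
  finally show "realign q (swap_op q * block_diag q U) $$ (r,c) =
    (swap_op q * block_diag q (\<lambda>j. transpose_mat (U j))) $$ (r,c)" .
qed (auto simp: realign_def)

lemma realign_block_diag_swap_op:
  "realign q (block_diag q U * swap_op q) = block_diag q U * swap_op q"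
proof (rule eq_matI)
  fix r c assume "r < dim_row (block_diag q U * swap_op q)" "c < dim_col (block_diag q U * swap_op q)"
  hence r: "r < q*q" and c: "c < q*q" by auto
  note R = pair_index_bounds[OF r] and C = pair_index_bounds[OF c]
  have "realign q (block_diag q U * swap_op q) $$ (r,c)
      = block_diag q U $$ ((c mod q)*q + r mod q, (r div q)*q + c div q)"
    using r c R C pair_index_less by (simp add: realign_def index_mult_swap_op)
  also have "\<dots> = (if r div q = c mod q then U (r div q) $$ (r mod q, c div q) else 0)"
    using R C pair_index_less by (auto simp: index_block_diag)
  also have "\<dots> = (block_diag q U * swap_op q) $$ (r,c)"
    using r c R C swap_index_less[OF c]
    by (auto simp: index_mult_swap_op swap_index_def index_block_diag)
  finally show "realign q (block_diag q U * swap_op q) $$ (r,c) = (block_diag q U * swap_op q) $$ (r,c)" .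
qed (auto simp: realign_def)

lemma dual_unitary_swap_op_block_diag:
  assumes "\<And>j. j < q \<Longrightarrow> unitary_mat q (U j)"
  shows "dual_unitary q (swap_op q * block_diag q U)"
proof -
  have "realign q (swap_op q * block_diag q U) = swap_op q * block_diag q (\<lambda>j. transpose_mat (U j))"
    using realign_swap_op_block_diag[of q U] assms unitary_mat_carrier by simp
  with assms show ?thesis unfolding dual_unitary_def
    by (auto intro!: unitary_mat_mult unitary_swap_op unitary_block_diag unitary_mat_transpose)
qed

lemma dual_unitary_block_diag_swap_op:
  assumes "\<And>j. j < q \<Longrightarrow> unitary_mat q (U j)"
  shows "dual_unitary q (block_diag q U * swap_op q)"
  unfolding dual_unitary_def realign_block_diag_swap_op using assms
  by (auto intro!: unitary_mat_mult unitary_swap_op unitary_block_diag)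

section \<open>The maps M_plus\<close>

lemma tensor_carrier [simp]: "tensor q A B \<in> carrier_mat (q*q) (q*q)"
  unfolding tensor_def by simp

lemma dim_tensor [simp]: "dim_row (tensor q A B) = q*q" "dim_col (tensor q A B) = q*q"
  unfolding tensor_def by simp_all

lemma index_tensor_one:
  "i < q \<Longrightarrow> j < q \<Longrightarrow> b < q \<Longrightarrow> b' < q \<Longrightarrow>
    tensor q a (1\<^sub>m q) $$ (i*q + b, j*q + b') = (if b = b' then a $$ (i,j) else 0)"
  using pair_index_less[of i q b] pair_index_less[of j q b'] by (simp add: tensor_def)

lemma index_block_diag_tensor_one_block_diag:
  assumes A: "\<And>j. j < q \<Longrightarrow> A j \<in> carrier_mat q q"
    and C: "\<And>j. j < q \<Longrightarrow> C j \<in> carrier_mat q q"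
    and r: "r < q*q" and c: "c < q*q"
  shows "(block_diag q A * tensor q a (1\<^sub>m q) * block_diag q C) $$ (r,c)
    = a $$ (r div q, c div q) * (A (r div q) * C (c div q)) $$ (r mod q, c mod q)"
proof -
  note R = pair_index_bounds[OF r] and Cc = pair_index_bounds[OF c]
  have left: "(block_diag q A * tensor q a (1\<^sub>m q)) $$ (r, (c div q)*q + b)
      = a $$ (r div q, c div q) * A (r div q) $$ (r mod q, b)" if b: "b < q" for b
  proof -
    have "(block_diag q A * tensor q a (1\<^sub>m q)) $$ (r, (c div q)*q + b)
      = (\<Sum>b'<q. if b' = b then A (r div q) $$ (r mod q, b') * a $$ (r div q, c div q) else 0)"
      using r b Cc pair_index_less[of "c div q" q b]
      by (simp add: index_block_diag_mult R index_tensor_one if_distrib cong: if_cong)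
    thus ?thesis using b by simp
  qed
  have "(block_diag q A * tensor q a (1\<^sub>m q) * block_diag q C) $$ (r,c)
    = (\<Sum>b<q. (a $$ (r div q, c div q) * A (r div q) $$ (r mod q, b)) * C (c div q) $$ (b, c mod q))"
    using r c by (simp add: index_mult_block_diag left)
  also have "\<dots> = a $$ (r div q, c div q) * (A (r div q) * C (c div q)) $$ (r mod q, c mod q)"
    using index_mult_mat_sum[OF A[of "r div q"] C[of "c div q"]] R Cc
    by (simp add: sum_distrib_left mult.assoc)
  finally show ?thesis .
qed

lemma dim_M_plus [simp]: "dim_row (M_plus q V a) = q" "dim_col (M_plus q V a) = q"
  by (simp_all add: M_plus_def ptrace1_def)

lemma index_M_plus:
  "x < q \<Longrightarrow> y < q \<Longrightarrow> M_plus q V a $$ (x,y) =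
    (1 / of_nat q) * (\<Sum>i<q. (adj V * tensor q a (1\<^sub>m q) * V) $$ (i*q + x, i*q + y))"
  by (simp add: M_plus_def ptrace1_def)

lemma M_plus_block_diag_swap_op:
  assumes U: "\<And>j. j < q \<Longrightarrow> U j \<in> carrier_mat q q"
  shows "M_plus q (block_diag q U * swap_op q) a =
    mat q q (\<lambda>(j,k). (1 / of_nat q) * tr (adj (U j) * U k) * a $$ (j,k))"
proof (rule eq_matI)
  let ?D = "block_diag q U" and ?S = "swap_op q" and ?T = "tensor q a (1\<^sub>m q)"
    and ?A = "block_diag q (\<lambda>j. adj (U j))"
  fix x y assume "x < dim_row (mat q q (\<lambda>(j,k). (1 / of_nat q) * tr (adj (U j) * U k) * a $$ (j,k)))"
    "y < dim_col (mat q q (\<lambda>(j,k). (1 / of_nat q) * tr (adj (U j) * U k) * a $$ (j,k)))"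
  hence x: "x < q" and y: "y < q" by auto
  have conjugated: "adj (?D * ?S) * ?T * (?D * ?S) = ?S * ((?A * ?T * ?D) * ?S)"
    by (simp add: adj_mult_mat[OF block_diag_carrier swap_op_carrier] adj_swap_op adj_block_diag[OF U]
        assoc_mult_mat[of _ "q*q" "q*q" _ "q*q" _ "q*q"])
  have "(adj (?D * ?S) * ?T * (?D * ?S)) $$ (i*q + x, i*q + y) = a $$ (x,y) * (adj (U x) * U y) $$ (i,i)"
    if i: "i < q" for i
    using i x y U pair_index_less[of i q] pair_index_less[of x q] pair_index_less[of y q]
    by (simp add: conjugated index_swap_op_conj index_block_diag_tensor_one_block_diag)
  thus "M_plus q (?D * ?S) a $$ (x,y) =
      mat q q (\<lambda>(j,k). (1 / of_nat q) * tr (adj (U j) * U k) * a $$ (j,k)) $$ (x,y)"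
    using x y U[OF x] by (simp add: index_M_plus tr_def sum_distrib_left mult_ac)
qed auto

lemma swap_op_conj_tensor_one: "swap_op q * (tensor q a (1\<^sub>m q) * swap_op q) = block_diag q (\<lambda>_. a)"
  by (rule eq_matI)
     (auto simp: index_swap_op_conj swap_index_def tensor_def index_block_diag pair_index_bounds
       pair_index_less)

lemma M_plus_swap_op_block_diag:
  assumes U: "\<And>j. j < q \<Longrightarrow> U j \<in> carrier_mat q q" and a: "a \<in> carrier_mat q q"
  shows "M_plus q (swap_op q * block_diag q U) a =
    mat q q (\<lambda>(x,y). (1 / of_nat q) * (\<Sum>j<q. (adj (U j) * a * U j) $$ (x,y)))"
proof -
  let ?D = "block_diag q U" and ?S = "swap_op q" and ?T = "tensor q a (1\<^sub>m q)"
    and ?A = "block_diag q (\<lambda>j. adj (U j))"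
  have "adj (?S * ?D) * ?T * (?S * ?D) = ?A * (?S * (?T * ?S)) * ?D"
    by (simp add: adj_mult_mat[OF swap_op_carrier block_diag_carrier] adj_swap_op adj_block_diag[OF U]
        assoc_mult_mat[of _ "q*q" "q*q" _ "q*q" _ "q*q"])
  also have "\<dots> = block_diag q (\<lambda>j. adj (U j) * a * U j)"
    using U a by (simp add: swap_op_conj_tensor_one block_diag_mult)
  finally have conjugated: "adj (?S * ?D) * ?T * (?S * ?D) = block_diag q (\<lambda>j. adj (U j) * a * U j)" .
  show ?thesis
    by (rule eq_matI) (auto simp: index_M_plus conjugated index_block_diag pair_index_less)
qed

section \<open>Spectrum\<close>

lemma superop_mat_entrywise_mult:
  "superop_mat q (\<lambda>b. mat q q (\<lambda>(j,k). f j k * b $$ (j,k))) =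
    mat (q*q) (q*q) (\<lambda>(r,c). if r = c then f (r div q) (r mod q) else 0)"
proof (rule eq_matI)
  fix r c assume "r < dim_row (mat (q*q) (q*q) (\<lambda>(r,c). if r = c then f (r div q) (r mod q) else 0))"
    "c < dim_col (mat (q*q) (q*q) (\<lambda>(r,c). if r = c then f (r div q) (r mod q) else 0))"
  hence r: "r < q*q" and c: "c < q*q" by auto
  have "(r div q = c div q \<and> r mod q = c mod q) \<longleftrightarrow> r = c"
    by (metis div_mult_mod_eq)
  thus "superop_mat q (\<lambda>b. mat q q (\<lambda>(j,k). f j k * b $$ (j,k))) $$ (r,c) =
      mat (q*q) (q*q) (\<lambda>(r,c). if r = c then f (r div q) (r mod q) else 0) $$ (r,c)"
    using r c pair_index_bounds[OF r] pair_index_bounds[OF c]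
    by (auto simp: superop_mat_def mat_unit_def)
qed (auto simp: superop_mat_def)

lemma char_poly_pair_diagonal:
  "char_poly (mat (q*q) (q*q) (\<lambda>(r,c). if r = c then f (r div q) (r mod q) else 0)) =
    (\<Prod>(j,k) \<in> {..<q} \<times> {..<q}. [:- f j k, 1:])"
proof -
  let ?A = "mat (q*q) (q*q) (\<lambda>(r,c). if r = c then f (r div q) (r mod q) else 0)"
  have "char_poly ?A = (\<Prod>a\<leftarrow>diag_mat ?A. [:- a, 1:])"
    by (rule char_poly_upper_triangular[of _ "q*q"]) (auto simp: upper_triangular_def)
  also have "\<dots> = (\<Prod>r<q*q. [:- f (r div q) (r mod q), 1:])"
    by (simp add: diag_mat_def comp_def prod.distinct_set_conv_list[symmetric] atLeast0LessThan)
  also have "\<dots> = (\<Prod>(j,k) \<in> {..<q} \<times> {..<q}. [:- f j k, 1:])"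
    unfolding prod_pair_index by (rule prod.cong) auto
  finally show ?thesis .
qed

lemma card_pairs_eq_ge_diagonal:
  assumes "\<And>j. j < q \<Longrightarrow> f j j = c"
  shows "q \<le> card {(j,k) \<in> {..<q} \<times> {..<q}. f j k = c}"
proof -
  have "(\<lambda>j. (j,j)) ` {..<q} \<subseteq> {(j,k) \<in> {..<q} \<times> {..<q}. f j k = c}"
    using assms by auto
  moreover have "finite {(j,k) \<in> {..<q} \<times> {..<q}. f j k = c}"
    by (rule finite_subset[of _ "{..<q} \<times> {..<q}"]) auto
  ultimately have "card ((\<lambda>j. (j,j)) ` {..<q}) \<le> card {(j,k) \<in> {..<q} \<times> {..<q}. f j k = c}"
    by (intro card_mono)
  then show ?thesis by (simp add: card_image inj_on_def)
qed

lemma card_pairs_eq_diagonal: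
  assumes "\<And>j. j < q \<Longrightarrow> f j j = c"
    and "\<And>j k. j < q \<Longrightarrow> k < q \<Longrightarrow> j \<noteq> k \<Longrightarrow> f j k = d"
    and "c \<noteq> d"
  shows "card {(j,k) \<in> {..<q} \<times> {..<q}. f j k = c} = q"
    and "card {(j,k) \<in> {..<q} \<times> {..<q}. f j k = d} = q*q - q"
proof -
  let ?Diag = "(\<lambda>j. (j,j)) ` {..<q}"
  have card_Diag: "card ?Diag = q" by (simp add: card_image inj_on_def)
  have "{(j,k) \<in> {..<q} \<times> {..<q}. f j k = c} = ?Diag"
    using assms by fastforce
  thus "card {(j,k) \<in> {..<q} \<times> {..<q}. f j k = c} = q" using card_Diag by simp
  have "{(j,k) \<in> {..<q} \<times> {..<q}. f j k = d} = {..<q} \<times> {..<q} - ?Diag"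
    using assms by fastforce
  moreover have "card ({..<q} \<times> {..<q} - ?Diag) = q*q - q"
    by (subst card_Diff_subset) (auto simp: card_Diag card_cartesian_product)
  ultimately show "card {(j,k) \<in> {..<q} \<times> {..<q}. f j k = d} = q*q - q" by simp
qed

theorem mainTheorem6:
  fixes q :: nat and U :: "nat \<Rightarrow> complex mat"
  assumes hq: "q \<ge> 2"
    and hU: "\<And>j. j < q \<Longrightarrow> unitary_mat q (U j)"
  defines "D \<equiv> block_diag q U"
    and "S \<equiv> swap_op q"
    and "lam \<equiv> (\<lambda>j k. (1 / of_nat q) * tr (adj (U j) * U k))"
  shows "dual_unitary q (S * D) \<and> dual_unitary q (D * S)
    \<and> (\<forall>a \<in> carrier_mat q q.
          M_plus q (D * S) a = mat q q (\<lambda>(j,k). lam j k * a $$ (j,k)))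
    \<and> (\<forall>a \<in> carrier_mat q q.
          M_plus q (S * D) a =
            mat q q (\<lambda>(x,y). (1 / of_nat q) * (\<Sum>j<q. (adj (U j) * a * U j) $$ (x,y))))
    \<and> char_poly (superop_mat q (M_plus q (D * S)))
        = (\<Prod>(j,k) \<in> {..<q} \<times> {..<q}. [:- lam j k, 1:])
    \<and> card {(j,k) \<in> {..<q} \<times> {..<q}. lam j k = 1} \<ge> q
    \<and> ((\<forall>j<q. \<forall>k<q. j \<noteq> k \<longrightarrow> tr (adj (U j) * U k) = 0) \<longrightarrow>
         card {(j,k) \<in> {..<q} \<times> {..<q}. lam j k = 1} = q
       \<and> card {(j,k) \<in> {..<q} \<times> {..<q}. lam j k = 0} = q * q - q)"
proof -
  have Uc: "\<And>j. j < q \<Longrightarrow> U j \<in> carrier_mat q q"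
    using hU unitary_mat_carrier by blast
  have M_DS: "M_plus q (D * S) = (\<lambda>a. mat q q (\<lambda>(j,k). lam j k * a $$ (j,k)))"
    using M_plus_block_diag_swap_op[of q U] Uc unfolding D_def S_def lam_def by auto
  have lam_diag: "lam j j = 1" if "j < q" for j
    using tr_adj_mult_unitary[OF hU[OF that]] hq unfolding lam_def by simp
  have "dual_unitary q (S * D)"
    unfolding S_def D_def using hU by (rule dual_unitary_swap_op_block_diag)
  moreover have "dual_unitary q (D * S)"
    unfolding S_def D_def using hU by (rule dual_unitary_block_diag_swap_op)
  moreover have "M_plus q (S * D) a =
      mat q q (\<lambda>(x,y). (1 / of_nat q) * (\<Sum>j<q. (adj (U j) * a * U j) $$ (x,y)))"
    if "a \<in> carrier_mat q q" for a
    unfolding S_def D_def using Uc that by (rule M_plus_swap_op_block_diag)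
  moreover have "char_poly (superop_mat q (M_plus q (D * S))) = (\<Prod>(j,k) \<in> {..<q} \<times> {..<q}. [:- lam j k, 1:])"
    unfolding M_DS superop_mat_entrywise_mult by (rule char_poly_pair_diagonal)
  moreover have "card {(j,k) \<in> {..<q} \<times> {..<q}. lam j k = 1} = q
      \<and> card {(j,k) \<in> {..<q} \<times> {..<q}. lam j k = 0} = q * q - q"
    if "\<forall>j<q. \<forall>k<q. j \<noteq> k \<longrightarrow> tr (adj (U j) * U k) = 0"
    using card_pairs_eq_diagonal[of q lam 1 0] lam_diag that unfolding lam_def by auto
  ultimately show ?thesis
    using card_pairs_eq_ge_diagonal[of q lam 1] lam_diag unfolding M_DS by auto
qed

end
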